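(* For every $p>1$ and every bounded open set $\Lambda\subset\mathbb C$, $\dim_H(I_{p,\Lambda})\le 1+1/p$.
   Context: For $\kappa\in\mathbb C$ let $E_\kappa(z)=e^z+\kappa$ and $E^n(\kappa):=E_\kappa^{\circ n}(\kappa)$, an entire function of $\kappa$ with derivative $(E^n)'$ with respect to $\kappa$. $I:=\{\kappa\colon E^n(\kappa)\to\infty\}$. For $p>1$: $P_{p,0}:=\{x+iy\colon x>0,\ |y|<x^{1/p}\}$, and for open $\Lambda$, $I_{p,\Lambda}:=\{\kappa\in\Lambda\cap I\colon |(E^n)'(\kappa)|\to\infty \text{ as } n\to\infty \text{ and } E^n(\kappa)\in P_{p,0} \text{ for all sufficiently large } n\}$. *)

theory Defs
  imports "HOL-Analysis.Analysis"
begin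

definition diam_pow :: "real \<Rightarrow> 'a::metric_space set \<Rightarrow> real" where
  "diam_pow s U = (if U = {} then 0 else if s = 0 then 1 else diameter U powr s)"

definition hausdorff_approx :: "real \<Rightarrow> real \<Rightarrow> 'a::metric_space set \<Rightarrow> ennreal" where
  "hausdorff_approx s \<delta> A =
     (INF U \<in> {U :: nat \<Rightarrow> 'a set. A \<subseteq> (\<Union>i. U i) \<and> (\<forall>i. bounded (U i) \<and> diameter (U i) \<le> \<delta>)}.
        (\<Sum>i. ennreal (diam_pow s (U i))))"

definition hausdorff_outer :: "real \<Rightarrow> 'a::metric_space set \<Rightarrow> ennreal" where
  "hausdorff_outer s A = (SUP \<delta> \<in> {0<..}. hausdorff_approx s \<delta> A)"

definition hausdorff_dim :: "'a::metric_space set \<Rightarrow> ereal" where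
  "hausdorff_dim A = Inf {ereal s | s. 0 \<le> s \<and> hausdorff_outer s A = 0}"

definition Eexp :: "complex \<Rightarrow> complex \<Rightarrow> complex" where
  "Eexp \<kappa> z = exp z + \<kappa>"

definition Eit :: "nat \<Rightarrow> complex \<Rightarrow> complex" where
  "Eit n \<kappa> = (Eexp \<kappa> ^^ n) \<kappa>"

definition escaping :: "complex set" where
  "escaping = {\<kappa>. filterlim (\<lambda>n. Eit n \<kappa>) at_infinity sequentially}"

definition P_region :: "real \<Rightarrow> complex set" where
  "P_region p = {z. 0 < Re z \<and> \<bar>Im z\<bar> < Re z powr (1 / p)}"

definition I_set :: "real \<Rightarrow> complex set \<Rightarrow> complex set" where
  "I_set p \<Lambda> = {\<kappa> \<in> \<Lambda> \<inter> escaping.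
      filterlim (\<lambda>n. norm (deriv (Eit n) \<kappa>)) at_top sequentially \<and>
      (\<forall>\<^sub>F n in sequentially. Eit n \<kappa> \<in> P_region p)}"

end

theory Submission
  imports Defs "HOL-Complex_Analysis.Weierstrass_Factorization"
begin

(* Fix s > 1 + 1/p.  We show that I_{p,\<Lambda>} is s-null: it has countable covers of arbitrarily
   small mesh and arbitrarily small s-sum; this forces hausdorff_outer s = 0 for every such s.

   1. Hausdorff-null sets: finite covers suffice, countable unions and local-to-global
      (Lindeloef) closure, and the resulting bound on hausdorff_dim.
   2. Elementary estimates: |t| \<le> 4|sin t| where cos t > 0, reduction of arguments mod 2\<pi>,
      and a grid of small cells covering a thin horizontal strip.
   3. Parameter dynamics: E^{n+1}(\<kappa>) = exp (E^n \<kappa>) + \<kappa>, the \<kappa>-derivative of E^n,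
      and local expansion of E^N near a parameter where |(E^N)'| \<ge> 2.
   4. The refinement step (locale escape_setting): on a set P where E^n expands distances by
      \<lambda> \<ge> 1, has image of diameter \<le> 5 and stays deep in P_{p,0}, the image E^n(P) near
      X = Re E^n lies in a strip |Im - 2\<pi>m| \<lesssim> e^{-(1-1/p)X}.  Cutting it into cells of size
      e^{-(X+5)} gives \<lesssim> e^{(1+1/p)X} pieces on which E^{n+1} expands by \<lambda> e^{X-5}/4, so the
      mass \<Sum> \<lambda>^{-s} at least halves.  Iterating gives the required covers.
   5. Every point of I_{p,\<Lambda>} has a neighbourhood on which this scheme starts, so I_{p,\<Lambda>}
      is s-null, and the theorem follows. *)

section \<open>Hausdorff-null sets\<close>

definition hausdorff_null :: "real \<Rightarrow> 'a::metric_space set \<Rightarrow> bool" where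
  "hausdorff_null s A \<longleftrightarrow> (\<forall>\<delta>>0. \<forall>e>0. \<exists>U::nat \<Rightarrow> 'a set. A \<subseteq> (\<Union>i. U i) \<and>
      (\<forall>i. bounded (U i) \<and> diameter (U i) \<le> \<delta>) \<and> (\<Sum>i. ennreal (diam_pow s (U i))) \<le> ennreal e)"

lemma hausdorff_null_imp_outer_zero:
  assumes "hausdorff_null s A"
  shows "hausdorff_outer s A = 0"
proof -
  have "hausdorff_approx s \<delta> A = 0" if "\<delta> > 0" for \<delta>
  proof -
    have "hausdorff_approx s \<delta> A \<le> 0 + ennreal e" if "e > 0" for e
    proof -
      obtain U where "A \<subseteq> (\<Union>i. U i)" "\<forall>i. bounded (U i) \<and> diameter (U i) \<le> \<delta>"
        and small: "(\<Sum>i. ennreal (diam_pow s (U i))) \<le> ennreal e"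
        using assms \<open>\<delta> > 0\<close> \<open>e > 0\<close> unfolding hausdorff_null_def by blast
      then have "hausdorff_approx s \<delta> A \<le> (\<Sum>i. ennreal (diam_pow s (U i)))"
        unfolding hausdorff_approx_def by (intro INF_lower) blast
      then show ?thesis using small by simp
    qed
    then have "hausdorff_approx s \<delta> A \<le> 0" by (rule ennreal_le_epsilon)
    then show ?thesis by simp
  qed
  then show ?thesis unfolding hausdorff_outer_def by simp
qed

lemma hausdorff_null_subset:
  assumes "hausdorff_null s B" "A \<subseteq> B"
  shows "hausdorff_null s A"
  using assms unfolding hausdorff_null_def by (meson order_trans)

lemma hausdorff_null_finite_cover:
  fixes A :: "'a::metric_space set"
  assumes cover: "\<And>\<delta> e. \<delta> > 0 \<Longrightarrow> e > 0 \<Longrightarrow> \<exists>(I::'b set) V. finite I \<and> A \<subseteq> (\<Union>i\<in>I. V i) \<and>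
       (\<forall>i\<in>I. bounded (V i) \<and> diameter (V i) \<le> \<delta>) \<and> (\<Sum>i\<in>I. diam_pow s (V i)) \<le> e"
  shows "hausdorff_null s A"
  unfolding hausdorff_null_def
proof (intro allI impI)
  fix \<delta> e :: real assume "\<delta> > 0" "e > 0"
  then obtain I :: "'b set" and V where I: "finite I" "A \<subseteq> (\<Union>i\<in>I. V i)"
    "\<forall>i\<in>I. bounded (V i) \<and> diameter (V i) \<le> \<delta>" "(\<Sum>i\<in>I. diam_pow s (V i)) \<le> e"
    using cover by meson
  obtain h where h: "bij_betw h {..<card I} I"
    using ex_bij_betw_nat_finite[OF I(1)] atLeast0LessThan by auto
  define U where "U n = (if n < card I then V (h n) else {})" for n
  have "A \<subseteq> (\<Union>n. U n)"
  proof
    fix x assume "x \<in> A"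
    then obtain i where "i \<in> I" "x \<in> V i" using I(2) by blast
    moreover obtain n where "n < card I" "h n = i"
      using \<open>i \<in> I\<close> bij_betw_imp_surj_on[OF h] by force
    ultimately show "x \<in> (\<Union>n. U n)" unfolding U_def by auto
  qed
  moreover have "\<forall>n. bounded (U n) \<and> diameter (U n) \<le> \<delta>"
    using I(3) bij_betwE[OF h] \<open>\<delta> > 0\<close> unfolding U_def by auto
  moreover have "(\<Sum>n. ennreal (diam_pow s (U n))) \<le> ennreal e"
  proof -
    have "(\<Sum>n. ennreal (diam_pow s (U n))) = (\<Sum>n<card I. ennreal (diam_pow s (U n)))"
      by (rule suminf_finite) (auto simp: U_def diam_pow_def)
    also have "\<dots> = ennreal (\<Sum>n<card I. diam_pow s (V (h n)))"
      by (simp add: U_def sum_ennreal diam_pow_def)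
    also have "(\<Sum>n<card I. diam_pow s (V (h n))) = (\<Sum>i\<in>I. diam_pow s (V i))"
      using sum.reindex_bij_betw[OF h] by simp
    finally show ?thesis using I(4) by (simp add: ennreal_leI)
  qed
  ultimately show "\<exists>U::nat \<Rightarrow> 'a set. A \<subseteq> (\<Union>i. U i) \<and>
      (\<forall>i. bounded (U i) \<and> diameter (U i) \<le> \<delta>) \<and> (\<Sum>i. ennreal (diam_pow s (U i))) \<le> ennreal e"
    by blast
qed

text \<open>Countable unions of s-null sets are s-null: the m-th set is covered with budget
  e/2^{m+1} and the covers are merged along a pairing of indices.\<close>
lemma hausdorff_null_countable_Union:
  fixes \<A> :: "'a::metric_space set set"
  assumes "countable \<A>" "\<And>A. A \<in> \<A> \<Longrightarrow> hausdorff_null s A"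
  shows "hausdorff_null s (\<Union>\<A>)"
proof (cases "\<A> = {}")
  case True then show ?thesis unfolding hausdorff_null_def
    by (intro allI impI exI[of _ "\<lambda>_. {}"]) (auto simp: diam_pow_def)
next
  case False
  define g where "g = from_nat_into \<A>"
  have gA: "g m \<in> \<A>" for m using False unfolding g_def by (simp add: from_nat_into)
  have Ug: "\<Union>\<A> = (\<Union>m. g m)"
    using range_from_nat_into[OF False assms(1)] unfolding g_def by simp
  show ?thesis unfolding hausdorff_null_def
  proof (intro allI impI)
    fix \<delta> e :: real assume "\<delta> > 0" "e > 0"
    have "\<forall>m. \<exists>U::nat \<Rightarrow> 'a set. g m \<subseteq> (\<Union>i. U i) \<and> (\<forall>i. bounded (U i) \<and> diameter (U i) \<le> \<delta>)
        \<and> (\<Sum>i. ennreal (diam_pow s (U i))) \<le> ennreal (e * (1/2)^Suc m)"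
      using assms(2)[OF gA] \<open>\<delta> > 0\<close> \<open>e > 0\<close> unfolding hausdorff_null_def by simp
    then obtain U where U: "\<And>m. g m \<subseteq> (\<Union>i. U m i)"
      "\<And>m i. bounded (U m i) \<and> diameter (U m i) \<le> \<delta>"
      "\<And>m. (\<Sum>i. ennreal (diam_pow s (U m i))) \<le> ennreal (e * (1/2)^Suc m)"
      by metis
    define W where "W i = (case prod_decode i of (m, j) \<Rightarrow> U m j)" for i
    have "\<Union>\<A> \<subseteq> (\<Union>i. W i)"
    proof
      fix x assume "x \<in> \<Union>\<A>"
      then obtain m j where "x \<in> U m j" using Ug U(1) by blast
      then have "x \<in> W (prod_encode (m, j))" unfolding W_def by simp
      then show "x \<in> (\<Union>i. W i)" by blast
    qed
    moreover have "\<forall>i. bounded (W i) \<and> diameter (W i) \<le> \<delta>"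
      using U(2) unfolding W_def by (auto split: prod.splits)
    moreover have "(\<Sum>i. ennreal (diam_pow s (W i))) \<le> ennreal e"
    proof -
      have geom: "(\<lambda>m. e * (1/2::real)^Suc m) sums e"
        using sums_mult[OF geometric_sums[of "1/2::real"], of "e/2"] by simp
      have "(\<Sum>i. ennreal (diam_pow s (W i)))
          = (\<Sum>i. (\<lambda>(m,j). ennreal (diam_pow s (U m j))) (prod_decode i))"
        unfolding W_def by (simp add: case_prod_beta)
      also have "\<dots> = (\<Sum>m. (\<Sum>j. ennreal (diam_pow s (U m j))))"
        by (rule suminf_ennreal_2dimen) simp
      also have "\<dots> \<le> (\<Sum>m. ennreal (e * (1/2)^Suc m))"
        by (intro suminf_le U(3)) auto
      also have "\<dots> = ennreal e"
        using \<open>e > 0\<close> geom by (subst suminf_ennreal2) (auto simp: sums_iff)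
      finally show ?thesis .
    qed
    ultimately show "\<exists>U::nat \<Rightarrow> 'a set. \<Union>\<A> \<subseteq> (\<Union>i. U i) \<and>
      (\<forall>i. bounded (U i) \<and> diameter (U i) \<le> \<delta>) \<and> (\<Sum>i. ennreal (diam_pow s (U i))) \<le> ennreal e"
      by blast
  qed
qed

text \<open>Local-to-global: in a second countable space, a set that is s-null near each of its
  points is s-null (Lindeloef reduces the neighbourhoods to countably many).\<close>
lemma hausdorff_null_locally:
  fixes A :: "'a::{metric_space, second_countable_topology} set"
  assumes "\<And>x. x \<in> A \<Longrightarrow> \<exists>U. open U \<and> x \<in> U \<and> hausdorff_null s (A \<inter> U)"
  shows "hausdorff_null s A"
proof -
  define \<U> where "\<U> = {U. open U \<and> hausdorff_null s (A \<inter> U)}"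
  obtain \<V> where V: "\<V> \<subseteq> \<U>" "countable \<V>" "\<Union>\<V> = \<Union>\<U>"
    using Lindelof[of \<U>] unfolding \<U>_def by blast
  have "A \<subseteq> \<Union>\<U>" using assms unfolding \<U>_def by blast
  then have "A = \<Union>((\<lambda>U. A \<inter> U) ` \<V>)" using V(3) by blast
  moreover have "hausdorff_null s (\<Union>((\<lambda>U. A \<inter> U) ` \<V>))"
    using V(1,2) unfolding \<U>_def by (intro hausdorff_null_countable_Union) auto
  ultimately show ?thesis by simp
qed

lemma hausdorff_dim_le_if_null:
  assumes "0 \<le> d" "\<And>s. d < s \<Longrightarrow> hausdorff_null s A"
  shows "hausdorff_dim A \<le> ereal d"
proof -
  let ?D = "{ereal s | s. 0 \<le> s \<and> hausdorff_outer s A = 0}"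
  have below: "Inf ?D \<le> ereal s" if "d < s" for s
  proof (rule Inf_lower)
    show "ereal s \<in> ?D"
      using that assms hausdorff_null_imp_outer_zero by fastforce
  qed
  have "Inf ?D \<le> ereal d"
  proof (rule dense_ge)
    fix y assume "ereal d < y"
    then show "Inf ?D \<le> y" using below by (cases y) auto
  qed
  then show ?thesis unfolding hausdorff_dim_def .
qed


section \<open>Elementary estimates\<close>

lemma le_4_sin:
  fixes x :: real
  assumes "0 \<le> x" "x \<le> pi/2"
  shows "x \<le> 4 * sin x"
proof (cases "x \<le> pi/3")
  case True
  text \<open>On [0, \<pi>/3] the function 2 sin x - x is nondecreasing since 2 cos x \<ge> 1.\<close>
  have "(\<lambda>x. 2 * sin x - x) 0 \<le> (\<lambda>x. 2 * sin x - x) x"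
  proof (rule DERIV_nonneg_imp_nondecreasing[OF assms(1)])
    fix y :: real assume y: "0 \<le> y" "y \<le> x"
    have "cos (pi/3) \<le> cos y" using y True by (intro cos_monotone_0_pi_le) auto
    then have "0 \<le> 2 * cos y - 1" by (simp add: cos_60)
    moreover have "DERIV (\<lambda>x. 2 * sin x - x) y :> 2 * cos y - 1"
      by (auto intro!: derivative_eq_intros)
    ultimately show "\<exists>d. DERIV (\<lambda>x. 2 * sin x - x) y :> d \<and> d \<ge> 0" by blast
  qed
  moreover have "0 \<le> sin x" using assms by (intro sin_ge_zero) auto
  ultimately show ?thesis by simp
next
  case False
  have "sin (pi/3) \<le> sin x" using False assms by (subst sin_mono_le_eq) auto
  then have "sqrt 3 / 2 \<le> sin x" by (simp add: sin_60)
  moreover have "(1::real) \<le> sqrt 3" by simp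
  moreover have "pi/2 < 2" using pi_less_4 by simp
  ultimately show ?thesis using assms by linarith
qed

text \<open>On [-\<pi>, \<pi>], where cos t > 0 forces |t| < \<pi>/2, the angle is controlled by its sine.\<close>
lemma abs_le_4_abs_sin:
  fixes t :: real
  assumes "-pi \<le> t" "t \<le> pi" "0 < cos t"
  shows "\<bar>t\<bar> \<le> 4 * \<bar>sin t\<bar>"
proof -
  have "sin \<bar>t\<bar> = \<bar>sin t\<bar>"
  proof (cases "t \<ge> 0")
    case True then show ?thesis using assms by (simp add: sin_ge_zero)
  next
    case False then have "sin (-t) \<ge> 0" using assms by (intro sin_ge_zero) auto
    then show ?thesis using False by simp
  qed
  moreover have "\<bar>t\<bar> \<le> pi/2"
  proof (rule ccontr)
    assume "\<not> \<bar>t\<bar> \<le> pi/2"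
    then have "cos \<bar>t\<bar> \<le> cos (pi/2)" using assms by (intro cos_monotone_0_pi_le) auto
    then show False using assms by (simp add: abs_if split: if_splits)
  qed
  then have "\<bar>t\<bar> \<le> 4 * sin \<bar>t\<bar>" by (intro le_4_sin) auto
  ultimately show ?thesis by simp
qed

lemma floor_div_eq_imp_close:
  fixes a b h :: real
  assumes "\<lfloor>a/h\<rfloor> = \<lfloor>b/h\<rfloor>" "h > 0"
  shows "\<bar>a - b\<bar> < h"
proof -
  have "\<bar>a/h - b/h\<bar> < 1"
    using floor_correct[of "a/h"] floor_correct[of "b/h"] assms(1) unfolding abs_less_iff by linarith
  then show ?thesis using assms(2) by (simp add: diff_divide_distrib[symmetric] abs_divide divide_less_eq)
qed

lemma real_nat_le: "of_int z \<le> (b::real) \<Longrightarrow> 0 \<le> b \<Longrightarrow> real (nat z) \<le> b"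
  by (cases "z \<ge> 0") auto

text \<open>Reduction of a real angle y to its representative in [-\<pi>, \<pi>): y = arg_red y + 2\<pi> winding y.\<close>
definition winding :: "real \<Rightarrow> int" where
  "winding y = \<lfloor>y / (2*pi) + 1/2\<rfloor>"

definition arg_red :: "real \<Rightarrow> real" where
  "arg_red y = y - 2 * pi * of_int (winding y)"

lemma arg_red_range: "-pi \<le> arg_red y" "arg_red y < pi"
proof -
  have "of_int (winding y) \<le> y/(2*pi) + 1/2" "y/(2*pi) + 1/2 < of_int (winding y) + 1"
    unfolding winding_def by linarith+
  then have "2 * pi * of_int (winding y) \<le> y + pi" "y + pi < 2 * pi * of_int (winding y) + 2*pi"
    by (simp_all add: field_simps)
  then show "-pi \<le> arg_red y" "arg_red y < pi" unfolding arg_red_def by linarith+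
qed

lemma sin_arg_red [simp]: "sin (arg_red y) = sin y"
  and cos_arg_red [simp]: "cos (arg_red y) = cos y"
  unfolding arg_red_def by (simp_all add: sin_diff cos_diff)

lemma abs_arg_red_le: "0 < cos y \<Longrightarrow> \<bar>arg_red y\<bar> \<le> 4 * \<bar>sin y\<bar>"
  using abs_le_4_abs_sin[of "arg_red y"] arg_red_range[of y] by simp

section \<open>Cells in a thin strip\<close>

text \<open>For points w whose imaginary part is within \<eta> of 2\<pi>\<int>, the cell of w records the
  square of side h containing w after shifting the imaginary part by 2\<pi> winding (Im w).\<close>
definition cell :: "real \<Rightarrow> real \<Rightarrow> complex \<Rightarrow> int \<times> int \<times> int" where
  "cell h \<eta> w = (\<lfloor>Re w / h\<rfloor>, winding (Im w), \<lfloor>(arg_red (Im w) + \<eta>) / h\<rfloor>)"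

text \<open>All cells of points with |Re w - X| \<le> 5, |Im w - Y| \<le> 5 and |arg_red (Im w)| \<le> \<eta>.\<close>
definition cell_grid :: "real \<Rightarrow> real \<Rightarrow> real \<Rightarrow> real \<Rightarrow> (int \<times> int \<times> int) set" where
  "cell_grid h \<eta> X Y = {\<lfloor>(X-5)/h\<rfloor>..\<lfloor>(X+5)/h\<rfloor>} \<times> {\<lceil>(Y-6)/(2*pi)\<rceil>..\<lfloor>(Y+6)/(2*pi)\<rfloor>}
      \<times> {0..\<lfloor>2*\<eta>/h\<rfloor>}"

lemma cell_eq_imp_close:
  assumes "cell h \<eta> w = cell h \<eta> w'" "h > 0"
  shows "norm (w - w') < 2*h"
proof -
  have eq: "\<lfloor>Re w / h\<rfloor> = \<lfloor>Re w' / h\<rfloor>" "winding (Im w) = winding (Im w')"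
    "\<lfloor>(arg_red (Im w) + \<eta>) / h\<rfloor> = \<lfloor>(arg_red (Im w') + \<eta>) / h\<rfloor>"
    using assms(1) unfolding cell_def by auto
  have "\<bar>Re w - Re w'\<bar> < h" using floor_div_eq_imp_close[OF eq(1) assms(2)] .
  moreover have "\<bar>(arg_red (Im w) + \<eta>) - (arg_red (Im w') + \<eta>)\<bar> < h"
    using floor_div_eq_imp_close[OF eq(3) assms(2)] .
  then have "\<bar>Im w - Im w'\<bar> < h" using eq(2) unfolding arg_red_def by simp
  ultimately show ?thesis using cmod_le[of "w - w'"] by simp
qed

lemma cell_in_grid:
  assumes "h > 0" "\<bar>Re w - X\<bar> \<le> 5" "\<bar>Im w - Y\<bar> \<le> 5" "\<bar>arg_red (Im w)\<bar> \<le> \<eta>" "\<eta> \<le> 1"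
  shows "cell h \<eta> w \<in> cell_grid h \<eta> X Y"
proof -
  have a: "\<lfloor>(X-5)/h\<rfloor> \<le> \<lfloor>Re w / h\<rfloor>" "\<lfloor>Re w / h\<rfloor> \<le> \<lfloor>(X+5)/h\<rfloor>"
    using assms(1,2) by (auto intro!: floor_mono divide_right_mono)
  have "Im w = arg_red (Im w) + 2 * pi * of_int (winding (Im w))" unfolding arg_red_def by simp
  then have "Y - 6 \<le> 2 * pi * of_int (winding (Im w))" "2 * pi * of_int (winding (Im w)) \<le> Y + 6"
    using assms(3-5) by linarith+
  then have "(Y-6)/(2*pi) \<le> of_int (winding (Im w))" "of_int (winding (Im w)) \<le> (Y+6)/(2*pi)"
    by (simp_all add: divide_simps mult.commute)
  then have b: "\<lceil>(Y-6)/(2*pi)\<rceil> \<le> winding (Im w)" "winding (Im w) \<le> \<lfloor>(Y+6)/(2*pi)\<rfloor>"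
    by (simp_all add: ceiling_le_iff le_floor_iff)
  have "0 \<le> (arg_red (Im w) + \<eta>) / h" "(arg_red (Im w) + \<eta>) / h \<le> 2*\<eta>/h"
    using assms(1,4) by (auto intro: divide_right_mono)
  then have c: "0 \<le> \<lfloor>(arg_red (Im w) + \<eta>) / h\<rfloor>" "\<lfloor>(arg_red (Im w) + \<eta>) / h\<rfloor> \<le> \<lfloor>2*\<eta>/h\<rfloor>"
    by (auto intro: floor_mono)
  show ?thesis unfolding cell_grid_def cell_def using a b c by auto
qed

lemma card_cell_grid:
  assumes "h > 0" "0 \<le> \<eta>"
  shows "real (card (cell_grid h \<eta> X Y)) \<le> (10/h + 2) * 4 * (2*\<eta>/h + 1)"
proof -
  define a0 where "a0 = \<lfloor>(X-5)/h\<rfloor>"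
  define a1 where "a1 = \<lfloor>(X+5)/h\<rfloor>"
  define b0 where "b0 = \<lceil>(Y-6)/(2*pi)\<rceil>"
  define b1 where "b1 = \<lfloor>(Y+6)/(2*pi)\<rfloor>"
  define c1 where "c1 = \<lfloor>2*\<eta>/h\<rfloor>"
  have card: "card (cell_grid h \<eta> X Y) = nat (a1 - a0 + 1) * (nat (b1 - b0 + 1) * nat (c1 + 1))"
    unfolding cell_grid_def a0_def a1_def b0_def b1_def c1_def by (simp add: card_cartesian_product)
  have "of_int a1 \<le> (X+5)/h" "(X-5)/h < of_int a0 + 1"
    unfolding a0_def a1_def by linarith+
  moreover have "(X+5)/h - (X-5)/h = 10/h" by (simp add: diff_divide_distrib[symmetric])
  ultimately have "real (nat (a1 - a0 + 1)) \<le> 10/h + 2"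
    using assms by (intro real_nat_le) auto
  moreover have "of_int b1 \<le> (Y+6)/(2*pi)" "(Y-6)/(2*pi) \<le> of_int b0"
    unfolding b0_def b1_def by linarith+
  moreover have "(Y+6)/(2*pi) - (Y-6)/(2*pi) = 6/pi" by (simp add: diff_divide_distrib[symmetric])
  moreover have "6/pi \<le> 3" using pi_ge_two by (simp add: divide_simps)
  ultimately have "real (nat (a1 - a0 + 1)) \<le> 10/h + 2" "real (nat (b1 - b0 + 1)) \<le> 4"
    by (auto intro: real_nat_le)
  moreover have "real (nat (c1 + 1)) \<le> 2*\<eta>/h + 1"
    unfolding c1_def using assms by (intro real_nat_le) (linarith, simp)
  ultimately have "real (nat (a1 - a0 + 1)) * (real (nat (b1 - b0 + 1)) * real (nat (c1 + 1)))
      \<le> (10/h + 2) * (4 * (2*\<eta>/h + 1))"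
    by (intro mult_mono) auto
  then show ?thesis unfolding card by (simp only: of_nat_mult mult.assoc)
qed


section \<open>Dynamics in the parameter plane\<close>

lemma Eit_0 [simp]: "Eit 0 \<kappa> = \<kappa>"
  by (simp add: Eit_def)

lemma Eit_Suc: "Eit (Suc n) \<kappa> = exp (Eit n \<kappa>) + \<kappa>"
  by (simp add: Eit_def Eexp_def)

text \<open>The \<kappa>-derivative of E^n, given by the chain rule recursion
  (E^{n+1})' = exp (E^n) (E^n)' + 1.\<close>
fun dEit :: "nat \<Rightarrow> complex \<Rightarrow> complex" where
  "dEit 0 \<kappa> = 1"
| "dEit (Suc n) \<kappa> = exp (Eit n \<kappa>) * dEit n \<kappa> + 1"

lemma continuous_on_Eit: "continuous_on UNIV (Eit n)"
proof (induction n)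
  case (Suc n)
  have "Eit (Suc n) = (\<lambda>\<kappa>. exp (Eit n \<kappa>) + \<kappa>)" by (simp add: fun_eq_iff Eit_Suc)
  then show ?case using Suc by (auto intro!: continuous_intros)
qed (simp add: Eit_def)

lemma has_field_derivative_Eit: "(Eit n has_field_derivative dEit n \<kappa>) (at \<kappa>)"
proof (induction n arbitrary: \<kappa>)
  case (Suc n)
  have "Eit (Suc n) = (\<lambda>\<kappa>. exp (Eit n \<kappa>) + \<kappa>)" by (simp add: fun_eq_iff Eit_Suc)
  then show ?case using Suc by (auto intro!: derivative_eq_intros)
qed (simp add: fun_eq_iff[of "Eit 0" "\<lambda>\<kappa>. \<kappa>", THEN iffD2])

lemma continuous_on_dEit: "continuous_on UNIV (dEit n)"
proof (induction n)
  case (Suc n)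
  have "dEit (Suc n) = (\<lambda>\<kappa>. exp (Eit n \<kappa>) * dEit n \<kappa> + 1)" by (simp add: fun_eq_iff)
  then show ?case using Suc continuous_on_Eit[of n] by (auto intro!: continuous_intros)
qed simp

lemma deriv_Eit: "deriv (Eit n) \<kappa> = dEit n \<kappa>"
  using has_field_derivative_Eit by (rule DERIV_imp_deriv)

text \<open>Near a parameter \<kappa>0 with |(E^N)'(\<kappa>0)| \<ge> 2, E^N does not contract distances and has
  image of diameter at most 5: E^N(\<kappa>) - (E^N)'(\<kappa>0) \<kappa> is 1-Lipschitz on a small ball.\<close>
lemma local_expansion:
  assumes "norm (dEit N \<kappa>0) \<ge> 2"
  obtains r where "r > 0" "\<And>\<kappa> \<kappa>'. \<kappa> \<in> ball \<kappa>0 r \<Longrightarrow> \<kappa>' \<in> ball \<kappa>0 r \<Longrightarrow>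
      norm (\<kappa> - \<kappa>') \<le> norm (Eit N \<kappa> - Eit N \<kappa>') \<and> norm (Eit N \<kappa> - Eit N \<kappa>') \<le> 5"
proof -
  have "isCont (dEit N) \<kappa>0" "isCont (Eit N) \<kappa>0"
    using continuous_on_dEit[of N] continuous_on_Eit[of N]
    by (simp_all add: continuous_on_eq_continuous_at)
  then obtain r1 r2 where r: "r1 > 0" "r2 > 0"
    and r1: "\<And>\<kappa>. dist \<kappa> \<kappa>0 < r1 \<Longrightarrow> dist (dEit N \<kappa>) (dEit N \<kappa>0) < 1"
    and r2: "\<And>\<kappa>. dist \<kappa> \<kappa>0 < r2 \<Longrightarrow> dist (Eit N \<kappa>) (Eit N \<kappa>0) < 2"
    unfolding continuous_at_eps_delta by (metis zero_less_one zero_less_numeral)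
  define r where "r = min r1 r2"
  have "norm (\<kappa> - \<kappa>') \<le> norm (Eit N \<kappa> - Eit N \<kappa>') \<and> norm (Eit N \<kappa> - Eit N \<kappa>') \<le> 5"
    if \<kappa>: "\<kappa> \<in> ball \<kappa>0 r" and \<kappa>': "\<kappa>' \<in> ball \<kappa>0 r" for \<kappa> \<kappa>'
  proof
    let ?g = "\<lambda>z. Eit N z - dEit N \<kappa>0 * z"
    have "norm (?g \<kappa> - ?g \<kappa>') \<le> 1 * norm (\<kappa> - \<kappa>')"
    proof (rule field_differentiable_bound[OF convex_ball])
      fix z assume z: "z \<in> ball \<kappa>0 r"
      show "(?g has_field_derivative (dEit N z - dEit N \<kappa>0)) (at z within ball \<kappa>0 r)"
        by (auto intro!: derivative_eq_intros has_field_derivative_Eit[THEN has_field_derivative_at_within])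
      show "norm (dEit N z - dEit N \<kappa>0) \<le> 1"
        using r1[of z] z by (simp add: r_def dist_norm norm_minus_commute)
    qed (use \<kappa> \<kappa>' in auto)
    moreover have "2 * norm (\<kappa> - \<kappa>') \<le> norm (dEit N \<kappa>0 * (\<kappa> - \<kappa>'))"
      using assms unfolding norm_mult by (intro mult_right_mono) auto
    moreover have "Eit N \<kappa> - Eit N \<kappa>' = dEit N \<kappa>0 * (\<kappa> - \<kappa>') + (?g \<kappa> - ?g \<kappa>')"
      by (simp add: algebra_simps)
    then have "norm (dEit N \<kappa>0 * (\<kappa> - \<kappa>')) - norm (?g \<kappa> - ?g \<kappa>') \<le> norm (Eit N \<kappa> - Eit N \<kappa>')"
      by (metis norm_diff_ineq)
    ultimately show "norm (\<kappa> - \<kappa>') \<le> norm (Eit N \<kappa> - Eit N \<kappa>')" by linarith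
    have "dist (Eit N \<kappa>) (Eit N \<kappa>0) < 2" "dist (Eit N \<kappa>') (Eit N \<kappa>0) < 2"
      using r2[of \<kappa>] r2[of \<kappa>'] \<kappa> \<kappa>' by (auto simp: r_def dist_commute)
    then show "norm (Eit N \<kappa> - Eit N \<kappa>') \<le> 5"
      using dist_triangle2[of "Eit N \<kappa>" "Eit N \<kappa>'" "Eit N \<kappa>0"] by (simp add: dist_norm)
  qed
  moreover have "r > 0" using r by (simp add: r_def)
  ultimately show ?thesis using that by blast
qed

section \<open>Estimates for one step of the iteration\<close>

lemma exp_plus_in_P_region_strip:
  fixes w \<kappa> :: complex and p K R0 :: real
  assumes p: "p > 1" and \<kappa>: "norm \<kappa> \<le> K" and R: "K < R0" "K \<le> exp (R0/p)" "R0 \<le> Re w"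
    and img: "R0 \<le> Re (exp w + \<kappa>)" "\<bar>Im (exp w + \<kappa>)\<bar> < Re (exp w + \<kappa>) powr (1/p)"
  shows "0 < cos (Im w)" "\<bar>sin (Im w)\<bar> \<le> 3 * exp (- (Re w * (1 - 1/p)))"
proof -
  define x where "x = Re w"
  define y where "y = Im w"
  have re: "Re (exp w + \<kappa>) = exp x * cos y + Re \<kappa>" by (simp add: Re_exp x_def y_def)
  have im: "Im (exp w + \<kappa>) = exp x * sin y + Im \<kappa>" by (simp add: Im_exp x_def y_def)
  have rk: "\<bar>Re \<kappa>\<bar> \<le> K" "\<bar>Im \<kappa>\<bar> \<le> K" using abs_Re_le_cmod[of \<kappa>] abs_Im_le_cmod[of \<kappa>] \<kappa> by linarith+
  have "exp x * cos y > 0" using re img(1) rk R(1) by linarith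
  then show "0 < cos (Im w)" using y_def by (simp add: zero_less_mult_iff)
  have R0pos: "R0 > 0" using \<kappa> R(1) norm_ge_zero[of \<kappa>] by linarith
  have "R0 / p \<le> R0" using R0pos p by (simp add: divide_le_eq)
  then have "R0/p \<le> x / p" "R0 / p \<le> x" using R(3) p x_def by (auto simp: divide_right_mono)
  then have Kx: "K \<le> exp (x/p)" "K \<le> exp x" using R(2) by (meson exp_le_cancel_iff order.trans)+
  have "exp x * cos y \<le> exp x" by simp
  then have "Re (exp w + \<kappa>) \<le> 2 * exp x" using re rk Kx by linarith
  then have "Re (exp w + \<kappa>) powr (1/p) \<le> (2 * exp x) powr (1/p)"
    using img(1) R0pos p by (intro powr_mono2) auto
  also have "\<dots> = 2 powr (1/p) * exp (x/p)"
    by (simp add: powr_mult exp_powr_real)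
  also have "\<dots> \<le> 2 * exp (x/p)"
    using powr_mono[of "1/p" 1 "2::real"] p by simp
  finally have "\<bar>Im (exp w + \<kappa>)\<bar> < 2 * exp (x/p)" using img(2) by linarith
  then have "exp x * \<bar>sin y\<bar> \<le> 3 * exp (x/p)"
    using im rk Kx by (simp add: abs_mult)
  then have "\<bar>sin y\<bar> \<le> 3 * exp (x/p) / exp x" by (simp add: field_simps)
  also have "3 * exp (x/p) / exp x = 3 * exp (- (x * (1 - 1/p)))"
    by (simp add: exp_diff algebra_simps)
  finally show "\<bar>sin (Im w)\<bar> \<le> 3 * exp (- (Re w * (1 - 1/p)))" by (simp add: x_def y_def)
qed

lemma exp_step_distortion:
  fixes w w' \<kappa> \<kappa>' :: complex and lam X h :: real
  assumes close: "norm (w - w') < 2*h" and h: "h = exp (-(X+5))" "h \<le> 1/4"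
    and expand: "lam * norm (\<kappa> - \<kappa>') \<le> norm (w - w')" "lam \<ge> 1"
    and re: "X - 5 \<le> Re w'" "Re w' \<le> X + 5" "8 \<le> exp (X-5)"
  shows "lam * exp (X-5) / 4 * norm (\<kappa> - \<kappa>') \<le> norm ((exp w + \<kappa>) - (exp w' + \<kappa>'))"
    "norm ((exp w + \<kappa>) - (exp w' + \<kappa>')) \<le> 5"
proof -
  define D where "D = w - w'"
  have Dn: "norm D \<le> 1/2" using close h unfolding D_def by linarith
  have eq: "(exp w + \<kappa>) - (exp w' + \<kappa>') = exp w' * (exp D - 1) + (\<kappa> - \<kappa>')"
    unfolding D_def by (simp add: exp_diff algebra_simps)
  have E: "exp (X-5) \<le> norm (exp w')" "norm (exp w') \<le> exp (X+5)" using re by simp_all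
  have b: "norm (exp D - 1) \<ge> 1/2 * norm D" "norm (exp D - 1) \<le> 3/2 * norm D"
    using norm_exp_bounds[OF Dn] by auto
  have kk: "norm (\<kappa> - \<kappa>') \<le> norm D"
    using expand mult_right_mono[of 1 lam "norm (\<kappa> - \<kappa>')"] unfolding D_def by simp
  have "exp (X-5) * (1/2 * norm D) \<le> norm (exp w') * norm (exp D - 1)"
    using E(1) b(1) by (intro mult_mono) auto
  then have low: "exp (X-5) / 2 * norm D \<le> norm (exp w' * (exp D - 1))" by (simp add: norm_mult)
  have "exp (X-5) / 2 * (lam * norm (\<kappa> - \<kappa>')) \<le> exp (X-5) / 2 * norm D"
    using expand(1) unfolding D_def by (intro mult_left_mono) auto
  moreover have "1 \<le> lam * exp (X-5) / 4"
    using mult_mono[of 1 lam 8 "exp (X-5)"] expand(2) re(3) by simp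
  then have "lam * exp (X-5) / 4 * norm (\<kappa> - \<kappa>') + norm (\<kappa> - \<kappa>') \<le> exp (X-5) / 2 * (lam * norm (\<kappa> - \<kappa>'))"
    using mult_right_mono[of 1 "lam * exp (X-5) / 4" "norm (\<kappa> - \<kappa>')"] by (simp add: algebra_simps)
  ultimately show "lam * exp (X-5) / 4 * norm (\<kappa> - \<kappa>') \<le> norm ((exp w + \<kappa>) - (exp w' + \<kappa>'))"
    unfolding eq using low norm_diff_ineq[of "exp w' * (exp D - 1)" "\<kappa> - \<kappa>'"] by linarith
  have "norm (exp w' * (exp D - 1)) \<le> exp (X+5) * (3/2 * (2*h))"
    unfolding norm_mult using E(2) b(2) close unfolding D_def by (intro mult_mono) auto
  also have "\<dots> = 3" unfolding h(1) by (simp add: mult_exp_exp)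
  finally show "norm ((exp w + \<kappa>) - (exp w' + \<kappa>')) \<le> 5"
    unfolding eq using kk Dn norm_triangle_ineq[of "exp w' * (exp D - 1)" "\<kappa> - \<kappa>'"] by linarith
qed


lemma card_strip_grid:
  fixes p X Y :: real
  assumes p: "p > 1" and X: "X \<ge> 5"
  shows "real (card (cell_grid (exp (-(X+5))) (12 * exp (-((X-5)*(1-1/p)))) X Y))
           \<le> 1296 * exp (-((X-5)*(1-1/p))) * exp (2*X+10)"
proof -
  define h where "h = exp (-(X+5))"
  define eps where "eps = 3 * exp (-((X-5)*(1-1/p)))"
  have hpos: "h > 0" and h1: "h \<le> 1" using X by (simp_all add: h_def)
  have "X + 5 - (X-5)*(1-1/p) = (X-5)/p + 10" by (simp add: algebra_simps diff_divide_distrib)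
  moreover have "(X-5)/p \<ge> 0" using X p by simp
  ultimately have "1 \<le> exp (X + 5 - (X-5)*(1-1/p))" by simp
  also have "exp (X + 5 - (X-5)*(1-1/p)) = exp (-((X-5)*(1-1/p))) / h"
    by (simp add: h_def exp_diff[symmetric] exp_minus field_simps)
  finally have eh: "1 \<le> eps / h" unfolding eps_def by simp
  have "real (card (cell_grid h (4*eps) X Y)) \<le> (10/h + 2) * 4 * (8 * eps / h + 1)"
    using card_cell_grid[OF hpos, of "4*eps" X Y] by (simp add: eps_def)
  also have "\<dots> \<le> (12/h) * 4 * (9 * eps / h)"
  proof (intro mult_mono)
    show "10/h + 2 \<le> 12/h" using hpos h1 by (simp add: field_simps)
    show "8 * eps / h + 1 \<le> 9 * eps / h" using eh by simp
  qed (use hpos in \<open>auto simp: eps_def\<close>)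
  also have "\<dots> = 432 * eps * (1/h) * (1/h)" by simp
  also have "1/h = exp (X+5)"
    by (simp only: h_def exp_minus[of "X+5"] divide_inverse mult_1 inverse_inverse_eq)
  also have "432 * eps * exp (X+5) * exp (X+5) = 1296 * exp (-((X-5)*(1-1/p))) * exp (2*X+10)"
    by (simp add: eps_def mult_exp_exp)
  finally show ?thesis unfolding h_def eps_def by simp
qed

text \<open>Each piece of the refinement gains the factor e^{X-5}/4 in expansion; against the count
  of card_strip_grid, for s > 1 + 1/p and X \<ge> R0 large the s-mass at least halves.\<close>
lemma refinement_mass_bound:
  fixes p s R0 X Y lam :: real
  assumes p: "p > 1" and s: "s > 1 + 1/p" and X: "X \<ge> R0" "R0 \<ge> 5" and lam: "lam \<ge> 1"
    and R0: "2592 * 4 powr s * exp 20 \<le> exp ((R0-5)*(s-1-1/p))"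
  shows "real (card (cell_grid (exp (-(X+5))) (12 * exp (-((X-5)*(1-1/p)))) X Y))
           * (lam * exp (X-5) / 4) powr (-s) \<le> lam powr (-s) / 2"
proof -
  define c where "c = s - 1 - 1/p"
  have c: "c > 0" using s c_def by simp
  note card_le = card_strip_grid[OF p, of X Y]
  have mu: "(lam * exp (X-5) / 4) powr (-s) = lam powr (-s) * exp (- ((X - 5) * s)) * 4 powr s"
  proof -
    have "(lam * exp (X-5) / 4) powr (-s) = lam powr (-s) * exp (X-5) powr (-s) / 4 powr (-s)"
      by (simp add: powr_divide powr_mult)
    also have "exp (X-5) powr (-s) = exp (- ((X - 5) * s))" by (simp add: exp_powr_real)
    also have "(4::real) powr (-s) = inverse (4 powr s)" by (rule powr_minus)
    finally show ?thesis by (simp only: divide_inverse inverse_inverse_eq)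
  qed
  have "real (card (cell_grid (exp (-(X+5))) (12 * exp (-((X-5)*(1-1/p)))) X Y))
       * (lam * exp (X-5) / 4) powr (-s)
     \<le> 1296 * exp (-((X-5)*(1-1/p))) * exp (2*X+10) * (lam powr (-s) * exp (- ((X - 5) * s)) * 4 powr s)"
    unfolding mu using X by (intro mult_right_mono[OF card_le]) simp_all
  also have "\<dots> = lam powr (-s) * (1296 * 4 powr s * exp (20 - (X-5)*c))"
  proof -
    have "-((X-5)*(1-1/p)) + (2*X+10) + (- ((X - 5) * s)) = 20 - (X-5)*c"
      by (simp add: c_def algebra_simps)
    then have "exp (-((X-5)*(1-1/p))) * exp (2*X+10) * exp (- ((X - 5) * s)) = exp (20 - (X-5)*c)"
      by (simp only: exp_add[symmetric])
    then show ?thesis by (simp only: mult_ac)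
  qed
  also have "\<dots> \<le> lam powr (-s) * (1/2)"
  proof (intro mult_left_mono)
    have "exp ((R0-5)*c) \<le> exp ((X-5)*c)" using X c by (simp add: mult_right_mono)
    then have "2 * (1296 * 4 powr s * exp 20) \<le> exp ((X-5)*c)" using R0 unfolding c_def by linarith
    then have "1296 * 4 powr s * exp 20 / exp ((X-5)*c) \<le> 1/2"
      by (simp add: divide_simps)
    then show "1296 * 4 powr s * exp (20 - (X-5)*c) \<le> 1/2"
      by (simp add: exp_diff mult.assoc)
  qed simp
  finally show ?thesis by simp
qed

lemma large_radius_exists:
  fixes p s K :: real
  assumes p: "p > 1" and s: "s > 1 + 1/p" and K: "K \<ge> 0"
  obtains R0 where "K < R0" "K \<le> exp (R0/p)" "8 \<le> exp (R0 - 5)" "R0 \<ge> 5"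
     "3 * exp (-((R0-5)*(1-1/p))) \<le> 1/4" "2592 * 4 powr s * exp 20 \<le> exp ((R0-5)*(s-1-1/p))"
proof -
  define c1 where "c1 = 1 - 1/p"
  define c2 where "c2 = s - 1 - 1/p"
  define M where "M = 2592 * 4 powr s * exp (20::real)"
  have c: "c1 > 0" "c2 > 0" unfolding c1_def c2_def using p s by simp_all
  define T where "T = 8 + p*K + K + 12/c1 + M/c2"
  have "0 \<le> p*K" "0 \<le> 12/c1" "0 \<le> M/c2" using c p K by (auto simp: M_def)
  then have T: "8 \<le> T" "p*K \<le> T" "K \<le> T" "12/c1 \<le> T" "M/c2 \<le> T"
    unfolding T_def using K by linarith+
  then have Tc: "12 \<le> T * c1" "M \<le> T * c2"
    using c by (simp_all add: pos_divide_le_eq)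
  define R0 where "R0 = 5 + T"
  have exp_ge: "1 + x \<le> exp x" for x :: real by (rule exp_ge_add_one_self)
  show ?thesis
  proof
    show "K < R0" "R0 \<ge> 5" unfolding R0_def using T by linarith+
    have "K \<le> R0/p" using p T unfolding R0_def by (simp add: field_simps)
    then show "K \<le> exp (R0/p)" using exp_ge[of "R0/p"] by linarith
    show "8 \<le> exp (R0 - 5)" unfolding R0_def using T(1) exp_ge[of T] by (simp only: add_diff_cancel_left')
    have "(R0 - 5)*(1-1/p) = T*c1" by (simp add: R0_def c1_def)
    moreover have "12 \<le> exp (T * c1)" using Tc exp_ge[of "T*c1"] by linarith
    ultimately show "3 * exp (-((R0-5)*(1-1/p))) \<le> 1/4" by (simp add: exp_minus field_simps)
    have "(R0 - 5)*(s-1-1/p) = T*c2" by (simp add: R0_def c2_def)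
    moreover have "M \<le> exp (T * c2)" using Tc exp_ge[of "T*c2"] by linarith
    ultimately show "2592 * 4 powr s * exp 20 \<le> exp ((R0-5)*(s-1-1/p))" by (simp add: M_def)
  qed
qed


section \<open>The refinement scheme\<close>

locale escape_setting =
  fixes p s K R0 :: real and S :: "complex set" and N :: nat
  assumes p: "p > 1" and s: "s > 1 + 1/p"
    and S_bounded: "\<And>\<kappa>. \<kappa> \<in> S \<Longrightarrow> norm \<kappa> \<le> K"
    and R0_gt_K: "K < R0" and R0_exp_K: "K \<le> exp (R0/p)" and R0_ge_5: "R0 \<ge> 5"
    and R0_exp_8: "8 \<le> exp (R0 - 5)"
    and R0_strip: "3 * exp (-((R0-5)*(1-1/p))) \<le> 1/4"
    and R0_mass: "2592 * 4 powr s * exp 20 \<le> exp ((R0-5)*(s-1-1/p))"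
begin

definition deep :: "complex set" where
  "deep = {\<kappa>\<in>S. \<forall>n\<ge>N. Eit n \<kappa> \<in> P_region p \<and> R0 \<le> Re (Eit n \<kappa>)}"

definition expanding_piece :: "nat \<Rightarrow> complex set \<Rightarrow> real \<Rightarrow> bool" where
  "expanding_piece n P lam \<longleftrightarrow> P \<subseteq> deep \<and> N \<le> n \<and> 1 \<le> lam \<and>
     (\<forall>\<kappa>\<in>P. \<forall>\<kappa>'\<in>P. lam * norm (\<kappa> - \<kappa>') \<le> norm (Eit n \<kappa> - Eit n \<kappa>') \<and> norm (Eit n \<kappa> - Eit n \<kappa>') \<le> 5)"

lemma deep_props:
  assumes "\<kappa> \<in> deep" "N \<le> n"
  shows "norm \<kappa> \<le> K" "R0 \<le> Re (Eit n \<kappa>)" "R0 \<le> Re (Eit (Suc n) \<kappa>)"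
    "\<bar>Im (Eit (Suc n) \<kappa>)\<bar> < Re (Eit (Suc n) \<kappa>) powr (1/p)"
  using assms S_bounded unfolding deep_def P_region_def by auto

lemma far_right_constants:
  assumes "R0 \<le> X"
  shows "8 \<le> exp (X-5)" "exp (-(X+5)) \<le> 1/4" "12 * exp (-((X-5)*(1-1/p))) \<le> 1"
proof -
  show E8: "8 \<le> exp (X-5)" using R0_exp_8 assms by (meson exp_le_cancel_iff diff_right_mono order.trans)
  have "exp (X-5) \<le> exp (X+5)" by simp
  then have "8 \<le> exp (X+5)" using E8 by linarith
  then have "8 * exp (-(X+5)) \<le> exp (X+5) * exp (-(X+5))" by (intro mult_right_mono) auto
  then show "exp (-(X+5)) \<le> 1/4" by (simp add: mult_exp_exp)
  have "(R0-5)*(1-1/p) \<le> (X-5)*(1-1/p)" using assms p by (intro mult_right_mono) auto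
  then have "exp (-((X-5)*(1-1/p))) \<le> exp (-((R0-5)*(1-1/p)))" by simp
  then show "12 * exp (-((X-5)*(1-1/p))) \<le> 1" using R0_strip by linarith
qed

text \<open>Deep orbits with Re E^n \<ge> X - 5 have Im E^n within 12 e^{-(1-1/p)(X-5)} of 2\<pi>\<int>, since
  E^{n+1} = exp (E^n) + \<kappa> must again lie in P_{p,0}.\<close>
lemma arg_red_small:
  assumes "\<kappa> \<in> deep" "N \<le> n" "X - 5 \<le> Re (Eit n \<kappa>)"
  shows "\<bar>arg_red (Im (Eit n \<kappa>))\<bar> \<le> 12 * exp (-((X-5)*(1-1/p)))"
proof -
  note d = deep_props[OF assms(1,2)]
  have strip: "0 < cos (Im (Eit n \<kappa>))" "\<bar>sin (Im (Eit n \<kappa>))\<bar> \<le> 3 * exp (- (Re (Eit n \<kappa>) * (1 - 1/p)))"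
    using exp_plus_in_P_region_strip[OF p d(1) R0_gt_K R0_exp_K d(2)] d(3,4) by (auto simp: Eit_Suc)
  have "(X-5)*(1-1/p) \<le> Re (Eit n \<kappa>) * (1-1/p)"
    using assms(3) p by (intro mult_right_mono) auto
  then have "exp (- (Re (Eit n \<kappa>) * (1 - 1/p))) \<le> exp (-((X-5)*(1-1/p)))" by simp
  then have "\<bar>sin (Im (Eit n \<kappa>))\<bar> \<le> 3 * exp (-((X-5)*(1-1/p)))" using strip(2) by linarith
  then show ?thesis using abs_arg_red_le[OF strip(1)] by linarith
qed

lemma same_cell_expansion:
  assumes P: "expanding_piece n P lam" and "\<kappa>0 \<in> P" "\<kappa> \<in> P" "\<kappa>' \<in> P"
    and X: "X = Re (Eit n \<kappa>0)"
    and close: "norm (Eit n \<kappa> - Eit n \<kappa>') < 2 * exp (-(X+5))"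
  shows "lam * exp (X-5) / 4 * norm (\<kappa> - \<kappa>') \<le> norm (Eit (Suc n) \<kappa> - Eit (Suc n) \<kappa>')
    \<and> norm (Eit (Suc n) \<kappa> - Eit (Suc n) \<kappa>') \<le> 5"
proof -
  have expand: "lam * norm (\<kappa> - \<kappa>') \<le> norm (Eit n \<kappa> - Eit n \<kappa>')" "1 \<le> lam"
    and near: "norm (Eit n \<kappa>' - Eit n \<kappa>0) \<le> 5" and deep: "\<kappa>0 \<in> deep" "N \<le> n"
    using P assms(2-4) unfolding expanding_piece_def by auto
  have "\<bar>Re (Eit n \<kappa>' - Eit n \<kappa>0)\<bar> \<le> 5" using near abs_Re_le_cmod order_trans by blast
  then have re: "X - 5 \<le> Re (Eit n \<kappa>')" "Re (Eit n \<kappa>') \<le> X + 5" using X by auto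
  have "R0 \<le> X" using deep_props(2)[OF deep] X by simp
  note c = far_right_constants[OF this]
  show ?thesis
    using exp_step_distortion[OF close refl c(2) expand re c(1)] by (simp add: Eit_Suc)
qed

lemma piece_image_in_grid:
  assumes P: "expanding_piece n P lam" and "\<kappa>0 \<in> P" "\<kappa> \<in> P"
    and X: "X = Re (Eit n \<kappa>0)" and h: "h = exp (-(X+5))"
    and \<eta>: "\<eta> = 12 * exp (-((X-5)*(1-1/p)))"
  shows "cell h \<eta> (Eit n \<kappa>) \<in> cell_grid h \<eta> X (Im (Eit n \<kappa>0))"
proof (rule cell_in_grid)
  have deep: "\<kappa>0 \<in> deep" "\<kappa> \<in> deep" "N \<le> n" and "norm (Eit n \<kappa> - Eit n \<kappa>0) \<le> 5"
    using P assms(2,3) unfolding expanding_piece_def by auto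
  then have "\<bar>Re (Eit n \<kappa> - Eit n \<kappa>0)\<bar> \<le> 5" "\<bar>Im (Eit n \<kappa> - Eit n \<kappa>0)\<bar> \<le> 5"
    using abs_Re_le_cmod abs_Im_le_cmod order_trans by blast+
  then show "\<bar>Re (Eit n \<kappa>) - X\<bar> \<le> 5" "\<bar>Im (Eit n \<kappa>) - Im (Eit n \<kappa>0)\<bar> \<le> 5"
    using X by simp_all
  then show "\<bar>arg_red (Im (Eit n \<kappa>))\<bar> \<le> \<eta>"
    using arg_red_small[OF deep(2,3)] \<eta> by simp
  have "R0 \<le> X" using deep_props(2)[OF deep(1,3)] X by simp
  then show "\<eta> \<le> 1" using far_right_constants(3) \<eta> by simp
qed (simp add: h)

text \<open>The pieces are the fibres of the cell map on the image E^n(P).\<close>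
lemma refine_step:
  assumes P: "expanding_piece n P lam"
  obtains F where "finite F" "P \<subseteq> (\<Union>x\<in>F. fst x)"
    "\<And>x. x \<in> F \<Longrightarrow> expanding_piece (Suc n) (fst x) (snd x) \<and> 2 * lam \<le> snd x"
    "(\<Sum>x\<in>F. snd x powr (-s)) \<le> lam powr (-s) / 2"
proof (cases "P = {}")
  case True
  then show ?thesis using that[of "{}"] by simp
next
  case False
  then obtain \<kappa>0 where \<kappa>0: "\<kappa>0 \<in> P" by blast
  have sub: "P \<subseteq> deep" and nN: "N \<le> n" and lam: "1 \<le> lam"
    using P unfolding expanding_piece_def by auto
  define X where "X = Re (Eit n \<kappa>0)"
  define Y where "Y = Im (Eit n \<kappa>0)"
  define h where "h = exp (-(X+5))"
  define \<eta> where "\<eta> = 12 * exp (-((X-5)*(1-1/p)))"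
  define mu where "mu = lam * exp (X-5) / 4"
  define G where "G = cell_grid h \<eta> X Y"
  define F where "F = (\<lambda>i. ({\<kappa>\<in>P. cell h \<eta> (Eit n \<kappa>) = i}, mu)) ` G"
  have XR: "R0 \<le> X" using deep_props(2)[OF _ nN] \<kappa>0 sub unfolding X_def by auto
  have hpos: "h > 0" by (simp add: h_def)
  have finG: "finite G" unfolding G_def cell_grid_def by simp
  have in_grid: "cell h \<eta> (Eit n \<kappa>) \<in> G" if "\<kappa> \<in> P" for \<kappa>
    using piece_image_in_grid[OF P \<kappa>0 that X_def h_def \<eta>_def] unfolding G_def Y_def .
  show ?thesis
  proof (rule that[of F])
    show "finite F" unfolding F_def using finG by simp
    show "P \<subseteq> (\<Union>x\<in>F. fst x)" using in_grid unfolding F_def by force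
  next
    fix x assume "x \<in> F"
    then obtain i where x: "x = ({\<kappa>\<in>P. cell h \<eta> (Eit n \<kappa>) = i}, mu)" unfolding F_def by blast
    have "mu * norm (\<kappa> - \<kappa>') \<le> norm (Eit (Suc n) \<kappa> - Eit (Suc n) \<kappa>')
        \<and> norm (Eit (Suc n) \<kappa> - Eit (Suc n) \<kappa>') \<le> 5"
      if "\<kappa> \<in> P" "\<kappa>' \<in> P" "cell h \<eta> (Eit n \<kappa>) = cell h \<eta> (Eit n \<kappa>')" for \<kappa> \<kappa>'
      using same_cell_expansion[OF P \<kappa>0 that(1,2) X_def] cell_eq_imp_close[OF that(3) hpos]
      unfolding mu_def h_def by simp
    moreover have "2 * lam \<le> mu"
      using mult_left_mono[OF far_right_constants(1)[OF XR], of lam] lam unfolding mu_def by simp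
    ultimately show "expanding_piece (Suc n) (fst x) (snd x) \<and> 2 * lam \<le> snd x"
      unfolding x expanding_piece_def using sub nN lam by auto
  next
    have "(\<Sum>x\<in>F. snd x powr (-s)) \<le> (\<Sum>i\<in>G. mu powr (-s))"
      unfolding F_def using sum_image_le[OF finG, of "\<lambda>x. snd x powr (-s)" "\<lambda>i. ({\<kappa>\<in>P. cell h \<eta> (Eit n \<kappa>) = i}, mu)"]
      by (simp add: o_def)
    also have "\<dots> = real (card G) * mu powr (-s)" by simp
    also have "\<dots> \<le> lam powr (-s) / 2"
      using refinement_mass_bound[OF p s XR R0_ge_5 lam R0_mass]
      unfolding G_def h_def \<eta>_def mu_def .
    finally show "(\<Sum>x\<in>F. snd x powr (-s)) \<le> lam powr (-s) / 2" .
  qed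
qed

lemma refine_iterate:
  assumes P0: "expanding_piece N P0 1"
  shows "\<exists>F. finite F \<and> P0 \<subseteq> (\<Union>x\<in>F. fst x)
    \<and> (\<forall>x\<in>F. expanding_piece (N+m) (fst x) (snd x) \<and> 2^m \<le> snd x)
    \<and> (\<Sum>x\<in>F. snd x powr (-s)) \<le> (1/2)^m"
proof (induction m)
  case 0
  show ?case using P0 by (intro exI[of _ "{(P0, 1)}"]) simp
next
  case (Suc m)
  then obtain F where F: "finite F" "P0 \<subseteq> (\<Union>x\<in>F. fst x)"
    "\<And>x. x \<in> F \<Longrightarrow> expanding_piece (N+m) (fst x) (snd x) \<and> 2^m \<le> snd x"
    "(\<Sum>x\<in>F. snd x powr (-s)) \<le> (1/2)^m" by blast
  have "\<exists>G. finite G \<and> fst x \<subseteq> (\<Union>y\<in>G. fst y)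
      \<and> (\<forall>y\<in>G. expanding_piece (Suc (N+m)) (fst y) (snd y) \<and> 2 * snd x \<le> snd y)
      \<and> (\<Sum>y\<in>G. snd y powr (-s)) \<le> snd x powr (-s) / 2" if x: "x \<in> F" for x
  proof -
    obtain G where "finite G" "fst x \<subseteq> (\<Union>y\<in>G. fst y)"
      "\<And>y. y \<in> G \<Longrightarrow> expanding_piece (Suc (N+m)) (fst y) (snd y) \<and> 2 * snd x \<le> snd y"
      "(\<Sum>y\<in>G. snd y powr (-s)) \<le> snd x powr (-s) / 2"
      using refine_step[OF F(3)[OF x, THEN conjunct1]] by blast
    then show ?thesis by blast
  qed
  then obtain G where G: "\<And>x. x \<in> F \<Longrightarrow> finite (G x) \<and> fst x \<subseteq> (\<Union>y\<in>G x. fst y)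
      \<and> (\<forall>y\<in>G x. expanding_piece (Suc (N+m)) (fst y) (snd y) \<and> 2 * snd x \<le> snd y)
      \<and> (\<Sum>y\<in>G x. snd y powr (-s)) \<le> snd x powr (-s) / 2"
    by metis
  define F' where "F' = snd ` (SIGMA x:F. G x)"
  have "finite F'" unfolding F'_def using F(1) G by auto
  moreover have "P0 \<subseteq> (\<Union>y\<in>F'. fst y)"
  proof
    fix \<kappa> assume "\<kappa> \<in> P0"
    then obtain x where x: "x \<in> F" "\<kappa> \<in> fst x" using F(2) by blast
    then obtain y where "y \<in> G x" "\<kappa> \<in> fst y" using G[OF x(1)] by blast
    then show "\<kappa> \<in> (\<Union>y\<in>F'. fst y)" unfolding F'_def using x(1) by force
  qed
  moreover have "\<forall>y\<in>F'. expanding_piece (N + Suc m) (fst y) (snd y) \<and> 2^(Suc m) \<le> snd y"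
  proof
    fix y assume "y \<in> F'"
    then obtain x where x: "x \<in> F" "y \<in> G x" unfolding F'_def by force
    then have "expanding_piece (Suc (N+m)) (fst y) (snd y)" "2 * snd x \<le> snd y" "2^m \<le> snd x"
      using G[OF x(1)] F(3)[OF x(1)] by auto
    then show "expanding_piece (N + Suc m) (fst y) (snd y) \<and> 2^(Suc m) \<le> snd y" by simp
  qed
  moreover have "(\<Sum>y\<in>F'. snd y powr (-s)) \<le> (1/2)^(Suc m)"
  proof -
    have "(\<Sum>y\<in>F'. snd y powr (-s)) \<le> (\<Sum>z\<in>(SIGMA x:F. G x). snd (snd z) powr (-s))"
      unfolding F'_def using F(1) G by (intro order_trans[OF sum_image_le]) (auto simp: o_def)
    also have "\<dots> = (\<Sum>x\<in>F. \<Sum>y\<in>G x. snd y powr (-s))"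
      using F(1) G by (subst sum.Sigma) (auto simp: case_prod_beta)
    also have "\<dots> \<le> (\<Sum>x\<in>F. snd x powr (-s) / 2)" using G by (intro sum_mono) auto
    also have "\<dots> \<le> (1/2)^m / 2" using F(4) by (simp add: sum_divide_distrib[symmetric])
    finally show ?thesis by simp
  qed
  ultimately show ?case by blast
qed

text \<open>Expanding pieces are s-null: after m refinements they are covered by sets of diameter
  \<le> 5/2^m with s-sum \<le> 5^s 2^{-m}.\<close>
lemma expanding_piece_null:
  assumes P0: "expanding_piece N P0 1"
  shows "hausdorff_null s P0"
proof (rule hausdorff_null_finite_cover)
  fix \<delta> e :: real assume \<delta>: "\<delta> > 0" and e: "e > 0"
  have "0 < 1 + 1/p" using p by (simp add: add_pos_pos)
  then have s0: "s > 0" using s by linarith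
  obtain m where m: "(1/2::real)^m < min (\<delta>/5) (e / 5 powr s)"
    using real_arch_pow_inv[of "min (\<delta>/5) (e / 5 powr s)" "1/2"] \<delta> e by auto
  then have m1: "5 * (1/2::real)^m \<le> \<delta>" and m2: "5 powr s * (1/2::real)^m \<le> e"
    by (auto simp: field_simps)
  obtain F where F: "finite F" "P0 \<subseteq> (\<Union>x\<in>F. fst x)"
    "\<And>x. x \<in> F \<Longrightarrow> expanding_piece (N+m) (fst x) (snd x) \<and> 2^m \<le> snd x"
    "(\<Sum>x\<in>F. snd x powr (-s)) \<le> (1/2)^m" using refine_iterate[OF P0, of m] by blast
  have piece: "bounded (fst x) \<and> diameter (fst x) \<le> \<delta> \<and> diam_pow s (fst x) \<le> 5 powr s * snd x powr (-s)"
    if "x \<in> F" for x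
  proof -
    have sub: "fst x \<subseteq> deep" and mx: "2^m \<le> snd x" and l1: "1 \<le> snd x"
      and pr: "\<And>\<kappa> \<kappa>'. \<kappa> \<in> fst x \<Longrightarrow> \<kappa>' \<in> fst x \<Longrightarrow> snd x * norm (\<kappa> - \<kappa>') \<le> 5"
      using F(3)[OF that] unfolding expanding_piece_def by (auto intro: order.trans)
    have "deep \<subseteq> cball 0 K" unfolding deep_def using S_bounded by auto
    then have bd: "bounded (fst x)" using sub bounded_cball bounded_subset by blast
    have dm: "diameter (fst x) \<le> 5 / snd x"
    proof (rule diameter_le)
      fix \<kappa> \<kappa>' assume "\<kappa> \<in> fst x" "\<kappa>' \<in> fst x"
      then show "norm (\<kappa> - \<kappa>') \<le> 5 / snd x" using pr l1 by (simp add: pos_le_divide_eq mult.commute)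
    qed (use l1 in simp)
    have "5 / snd x \<le> 5 / 2^m" using mx l1 by (intro divide_left_mono) (auto intro: mult_pos_pos)
    then have "5 / snd x \<le> 5 * (1/2)^m" by (simp add: power_one_over)
    then have "diameter (fst x) \<le> \<delta>" using dm m1 by linarith
    moreover have "diam_pow s (fst x) \<le> (5 / snd x) powr s"
      using powr_mono2[OF _ diameter_ge_0[OF bd] dm, of s] s0 by (simp add: diam_pow_def)
    moreover have "(5 / snd x) powr s = 5 powr s * snd x powr (-s)"
      by (subst powr_divide) (simp_all add: powr_minus divide_inverse)
    ultimately show ?thesis using bd by simp
  qed
  show "\<exists>(I::(complex set \<times> real) set) V. finite I \<and> P0 \<subseteq> (\<Union>i\<in>I. V i) \<and>
       (\<forall>i\<in>I. bounded (V i) \<and> diameter (V i) \<le> \<delta>) \<and> (\<Sum>i\<in>I. diam_pow s (V i)) \<le> e"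
  proof (intro exI[of _ F] exI[of _ fst] conjI)
    have "(\<Sum>i\<in>F. diam_pow s (fst i)) \<le> (\<Sum>i\<in>F. 5 powr s * snd i powr (-s))"
      using piece by (intro sum_mono) auto
    also have "\<dots> \<le> 5 powr s * (1/2)^m" using F(4) by (simp add: sum_distrib_left[symmetric])
    finally show "(\<Sum>i\<in>F. diam_pow s (fst i)) \<le> e" using m2 by linarith
  qed (use F piece in auto)
qed

text \<open>Deep parameters at which |(E^N)'| \<ge> 2 form an s-null set: each has a neighbourhood
  that is an expanding piece with factor 1.\<close>
lemma deep_expanding_null: "hausdorff_null s (deep \<inter> {\<kappa>. 2 \<le> norm (dEit N \<kappa>)})"
proof (rule hausdorff_null_locally)
  fix \<kappa> assume "\<kappa> \<in> deep \<inter> {\<kappa>. 2 \<le> norm (dEit N \<kappa>)}"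
  then obtain r where r: "r > 0" "\<And>\<kappa>1 \<kappa>2. \<kappa>1 \<in> ball \<kappa> r \<Longrightarrow> \<kappa>2 \<in> ball \<kappa> r \<Longrightarrow>
      norm (\<kappa>1 - \<kappa>2) \<le> norm (Eit N \<kappa>1 - Eit N \<kappa>2) \<and> norm (Eit N \<kappa>1 - Eit N \<kappa>2) \<le> 5"
    using local_expansion by blast
  have "expanding_piece N (deep \<inter> {\<kappa>. 2 \<le> norm (dEit N \<kappa>)} \<inter> ball \<kappa> r) 1"
    unfolding expanding_piece_def using r(2) by auto
  then show "\<exists>U. open U \<and> \<kappa> \<in> U \<and> hausdorff_null s (deep \<inter> {\<kappa>. 2 \<le> norm (dEit N \<kappa>)} \<inter> U)"
    using r(1) expanding_piece_null by (intro exI[of _ "ball \<kappa> r"]) auto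
qed

end

section \<open>The dimension bound\<close>

lemma P_region_re_ge:
  fixes z :: complex and p R :: real
  assumes "z \<in> P_region p" "p > 1" "norm z \<ge> 2 * \<bar>R\<bar> + 2"
  shows "R \<le> Re z"
proof -
  have z: "0 < Re z" "\<bar>Im z\<bar> < Re z powr (1/p)" using assms(1) unfolding P_region_def by auto
  have "Re z powr (1/p) \<le> max 1 (Re z)"
  proof (cases "Re z \<ge> 1")
    case True
    then show ?thesis using powr_mono[of "1/p" 1 "Re z"] assms(2) by simp
  next
    case False
    then show ?thesis using powr_mono2[of "1/p" "Re z" 1] z(1) assms(2) by simp
  qed
  then show ?thesis using cmod_le[of z] z assms(3) by linarith
qed

lemma eventually_far_right:
  assumes "filterlim (\<lambda>n. Eit n \<kappa>) at_infinity sequentially"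
    "\<forall>\<^sub>F n in sequentially. Eit n \<kappa> \<in> P_region p" "p > 1"
  shows "\<forall>\<^sub>F n in sequentially. Eit n \<kappa> \<in> P_region p \<and> R \<le> Re (Eit n \<kappa>)"
proof -
  have "filterlim (\<lambda>n. norm (Eit n \<kappa>)) at_top sequentially"
    using assms(1) by (rule filterlim_at_infinity_imp_norm_at_top)
  then have "\<forall>\<^sub>F n in sequentially. 2 * \<bar>R\<bar> + 2 \<le> norm (Eit n \<kappa>)"
    by (simp add: filterlim_at_top)
  with assms(2) show ?thesis
    by eventually_elim (use P_region_re_ge assms(3) in blast)
qed

text \<open>For s > 1 + 1/p the set I_{p,\<Lambda>} is s-null: it is covered by the countably many sets
  of deep parameters from time N on with |(E^N)'| \<ge> 2.\<close>
lemma I_set_null: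
  fixes p s :: real and \<Lambda> :: "complex set"
  assumes p: "p > 1" and \<Lambda>: "bounded \<Lambda>" and s: "s > 1 + 1/p"
  shows "hausdorff_null s (I_set p \<Lambda>)"
proof -
  obtain K where K: "K > 0" "\<And>\<kappa>. \<kappa> \<in> \<Lambda> \<Longrightarrow> norm \<kappa> \<le> K" using \<Lambda> unfolding bounded_pos by auto
  obtain R0 where R0: "K < R0" "K \<le> exp (R0/p)" "8 \<le> exp (R0 - 5)" "R0 \<ge> 5"
     "3 * exp (-((R0-5)*(1-1/p))) \<le> 1/4" "2592 * 4 powr s * exp 20 \<le> exp ((R0-5)*(s-1-1/p))"
    using large_radius_exists[OF p s, of K] K(1) by auto
  define D where "D N = {\<kappa>\<in>\<Lambda>. \<forall>n\<ge>N. Eit n \<kappa> \<in> P_region p \<and> R0 \<le> Re (Eit n \<kappa>)}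
      \<inter> {\<kappa>. 2 \<le> norm (dEit N \<kappa>)}" for N
  have null: "hausdorff_null s (D N)" for N
  proof -
    interpret escape_setting p s K R0 \<Lambda> N
      unfolding escape_setting_def using p s K R0 by auto
    show ?thesis using deep_expanding_null unfolding D_def deep_def .
  qed
  have "I_set p \<Lambda> \<subseteq> (\<Union>N. D N)"
  proof
    fix \<kappa> assume "\<kappa> \<in> I_set p \<Lambda>"
    then have \<kappa>: "\<kappa> \<in> \<Lambda>" "filterlim (\<lambda>n. Eit n \<kappa>) at_infinity sequentially"
      "filterlim (\<lambda>n. norm (dEit n \<kappa>)) at_top sequentially"
      "\<forall>\<^sub>F n in sequentially. Eit n \<kappa> \<in> P_region p"
      unfolding I_set_def escaping_def deriv_Eit by auto
    have "\<forall>\<^sub>F n in sequentially. Eit n \<kappa> \<in> P_region p \<and> R0 \<le> Re (Eit n \<kappa>)"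
      using eventually_far_right[OF \<kappa>(2,4) p] .
    moreover have "\<forall>\<^sub>F n in sequentially. 2 \<le> norm (dEit n \<kappa>)"
      using \<kappa>(3) by (simp add: filterlim_at_top)
    ultimately have "\<forall>\<^sub>F n in sequentially.
        (Eit n \<kappa> \<in> P_region p \<and> R0 \<le> Re (Eit n \<kappa>)) \<and> 2 \<le> norm (dEit n \<kappa>)"
      by (rule eventually_conj)
    then obtain N where "\<forall>n\<ge>N. (Eit n \<kappa> \<in> P_region p \<and> R0 \<le> Re (Eit n \<kappa>)) \<and> 2 \<le> norm (dEit n \<kappa>)"
      unfolding eventually_sequentially by blast
    then show "\<kappa> \<in> (\<Union>N. D N)" using \<kappa>(1) unfolding D_def by blast
  qed
  moreover have "hausdorff_null s (\<Union>N. D N)"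
    using null by (intro hausdorff_null_countable_Union) auto
  ultimately show ?thesis by (rule hausdorff_null_subset[rotated])
qed

theorem theorem3p2:
  fixes p :: real and \<Lambda> :: "complex set"
  assumes "p > 1" and "open \<Lambda>" and "bounded \<Lambda>"
  shows "hausdorff_dim (I_set p \<Lambda>) \<le> ereal (1 + 1 / p)"
proof (rule hausdorff_dim_le_if_null)
  show "0 \<le> 1 + 1/p" using \<open>p > 1\<close> by (simp add: add_nonneg_nonneg)
  show "hausdorff_null s (I_set p \<Lambda>)" if "1 + 1/p < s" for s
    using I_set_null[OF \<open>p > 1\<close> \<open>bounded \<Lambda>\<close> that] .
qed

end
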